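(* Let $M$ be a sparse paving matroid of rank $r$ on $n$ elements with $2r\leq n$. Then, averaged over all cyclic orderings of $E(M)$, the number of $r$-intervals that are circuit-hyperplanes of $M$ is less than two.
   Context: A matroid $M$ of rank $r$ is sparse paving if every nonspanning circuit is a hyperplane; equivalently, every $r$-subset of $E(M)$ is a basis or a circuit-hyperplane (a set that is both a circuit and a hyperplane). A cyclic ordering (cycle) on $E(M)$ is a cyclic permutation $\sigma$ of $E(M)$ consisting of a single cycle through all $n$ elements; there are $(n-1)!$ of them. A $k$-interval in $\sigma$ is a set of $k$ cyclically-consecutive elements, i.e., $\{x,\sigma(x),\dots,\sigma^{k-1}(x)\}$ for some $x$. *)

theory Defs
  imports Complex_Main "HOL-Combinatorics.Permutations"
begin

definition matroid_bases :: "'a set \<Rightarrow> 'a set set \<Rightarrow> bool" where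
  "matroid_bases E \<B> \<longleftrightarrow> finite E \<and> \<B> \<noteq> {} \<and> (\<forall>B\<in>\<B>. B \<subseteq> E) \<and>
     (\<forall>B1\<in>\<B>. \<forall>B2\<in>\<B>. \<forall>x\<in>B1 - B2. \<exists>y\<in>B2 - B1. insert y (B1 - {x}) \<in> \<B>)"

definition indep :: "'a set set \<Rightarrow> 'a set \<Rightarrow> bool" where
  "indep \<B> I \<longleftrightarrow> (\<exists>B\<in>\<B>. I \<subseteq> B)"

definition mrank :: "'a set set \<Rightarrow> 'a set \<Rightarrow> nat" where
  "mrank \<B> X = Max (card ` {I. I \<subseteq> X \<and> indep \<B> I})"

definition circuit :: "'a set \<Rightarrow> 'a set set \<Rightarrow> 'a set \<Rightarrow> bool" where
  "circuit E \<B> C \<longleftrightarrow> C \<subseteq> E \<and> \<not> indep \<B> C \<and> (\<forall>e\<in>C. indep \<B> (C - {e}))"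

definition flat :: "'a set \<Rightarrow> 'a set set \<Rightarrow> 'a set \<Rightarrow> bool" where
  "flat E \<B> X \<longleftrightarrow> X \<subseteq> E \<and> (\<forall>e\<in>E - X. mrank \<B> (insert e X) > mrank \<B> X)"

definition hyperplane :: "'a set \<Rightarrow> 'a set set \<Rightarrow> 'a set \<Rightarrow> bool" where
  "hyperplane E \<B> X \<longleftrightarrow> flat E \<B> X \<and> mrank \<B> X = mrank \<B> E - 1"

definition circuit_hyperplane :: "'a set \<Rightarrow> 'a set set \<Rightarrow> 'a set \<Rightarrow> bool" where
  "circuit_hyperplane E \<B> X \<longleftrightarrow> circuit E \<B> X \<and> hyperplane E \<B> X"

definition sparse_paving :: "'a set \<Rightarrow> 'a set set \<Rightarrow> bool" where
  "sparse_paving E \<B> \<longleftrightarrow> matroid_bases E \<B> \<and>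
     (\<forall>C. circuit E \<B> C \<and> mrank \<B> C < mrank \<B> E \<longrightarrow> hyperplane E \<B> C)"

(* cyclic orderings: permutations of E consisting of a single cycle through all elements *)
definition cyclic_orderings :: "'a set \<Rightarrow> ('a \<Rightarrow> 'a) set" where
  "cyclic_orderings E = {\<sigma>. \<sigma> permutes E \<and> (\<forall>x\<in>E. \<forall>y\<in>E. \<exists>k. (\<sigma> ^^ k) x = y)}"

definition interval :: "('a \<Rightarrow> 'a) \<Rightarrow> 'a \<Rightarrow> nat \<Rightarrow> 'a set" where
  "interval \<sigma> x k = {(\<sigma> ^^ i) x | i. i < k}"

definition num_intervals :: "'a set \<Rightarrow> ('a \<Rightarrow> 'a) \<Rightarrow> nat \<Rightarrow> ('a set \<Rightarrow> bool) \<Rightarrow> nat" where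
  "num_intervals E \<sigma> k P = card {I. \<exists>x\<in>E. I = interval \<sigma> x k \<and> P I}"

end

theory Submission
  imports Defs
begin

text \<open>
  Count pairs \<open>(\<sigma>, x)\<close> such that the \<open>r\<close>-interval of \<open>\<sigma>\<close> starting at \<open>x\<close> is a
  circuit-hyperplane \<open>x + J\<close>, where \<open>J\<close> is the \<open>(r-1)\<close>-interval after \<open>x\<close>. For each such
  pair and each \<open>y \<notin> J\<close>, conjugating \<open>\<sigma>\<close> by the transposition \<open>(x y)\<close> gives a cycle
  \<open>\<sigma>'\<close> in which \<open>J\<close> is the \<open>(r-1)\<close>-interval after \<open>y\<close>. Since two circuit-hyperplanes
  cannot share \<open>r - 1\<close> elements, \<open>x\<close> is determined by \<open>J\<close>, so \<open>(\<sigma>', y)\<close> determines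
  \<open>(\<sigma>, x, y)\<close>. With \<open>N\<close> cycles and \<open>n\<close> elements this gives
  \<open>#pairs \<cdot> (n - r + 1) \<le> N n\<close>, and \<open>n < 2(n - r + 1)\<close> because \<open>2r \<le> n\<close>.
\<close>

lemma interval_eq_image: "interval \<sigma> x k = (\<lambda>i. (\<sigma> ^^ i) x) ` {..<k}"
  unfolding interval_def by auto

lemma finite_interval: "finite (interval \<sigma> x k)"
  unfolding interval_eq_image by simp

lemma card_interval_le: "card (interval \<sigma> x k) \<le> k"
  unfolding interval_eq_image using card_image_le[of "{..<k}"] by simp

lemma interval_0: "interval \<sigma> x 0 = {}"
  unfolding interval_def by simp

lemma interval_Suc: "interval \<sigma> x (Suc k) = insert x (interval \<sigma> (\<sigma> x) k)"
proof -
  have "(\<sigma> ^^ Suc i) x = (\<sigma> ^^ i) (\<sigma> x)" for i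
    by (simp add: funpow_Suc_right del: funpow.simps)
  then show ?thesis
    unfolding interval_eq_image lessThan_Suc_eq_insert_0 image_insert image_image by simp
qed

lemma funpow_conj_involution:
  assumes "\<tau> \<circ> \<tau> = id"
  shows "(\<tau> \<circ> \<sigma> \<circ> \<tau>) ^^ i = \<tau> \<circ> (\<sigma> ^^ i) \<circ> \<tau>"
proof (induction i)
  case 0
  then show ?case using assms by simp
next
  case (Suc i)
  have "(\<tau> \<circ> \<sigma> \<circ> \<tau>) ^^ Suc i = (\<tau> \<circ> \<sigma> \<circ> \<tau>) \<circ> (\<tau> \<circ> (\<sigma> ^^ i) \<circ> \<tau>)"
    by (simp only: funpow.simps(2) Suc.IH)
  also have "\<dots> = \<tau> \<circ> \<sigma> \<circ> (\<tau> \<circ> \<tau>) \<circ> (\<sigma> ^^ i) \<circ> \<tau>"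
    by (simp add: comp_assoc)
  also have "\<dots> = \<tau> \<circ> (\<sigma> ^^ Suc i) \<circ> \<tau>"
    using assms by (simp add: comp_assoc)
  finally show ?case .
qed

lemma interval_conj_involution:
  assumes "\<tau> \<circ> \<tau> = id"
  shows "interval (\<tau> \<circ> \<sigma> \<circ> \<tau>) (\<tau> x) k = \<tau> ` interval \<sigma> x k"
proof -
  have "\<tau> (\<tau> w) = w" for w using assms by (metis comp_apply id_apply)
  then show ?thesis unfolding interval_def funpow_conj_involution[OF assms] by auto
qed

lemma interval_conj_transpose:
  fixes x y :: 'a
  defines "\<tau> \<equiv> Transposition.transpose x y"
  assumes "x \<notin> interval \<sigma> (\<sigma> x) k" "y \<notin> interval \<sigma> (\<sigma> x) k"
  shows "interval (\<tau> \<circ> \<sigma> \<circ> \<tau>) ((\<tau> \<circ> \<sigma> \<circ> \<tau>) y) k = interval \<sigma> (\<sigma> x) k"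
proof -
  have "interval (\<tau> \<circ> \<sigma> \<circ> \<tau>) ((\<tau> \<circ> \<sigma> \<circ> \<tau>) y) k = \<tau> ` interval \<sigma> (\<sigma> x) k"
    using interval_conj_involution[of \<tau> \<sigma> "\<sigma> x" k] by (simp add: \<tau>_def)
  also have "\<dots> = interval \<sigma> (\<sigma> x) k"
    using assms(2,3) by (auto simp: \<tau>_def transpose_def image_iff)
  finally show ?thesis .
qed

lemma finite_cyclic_orderings: "finite E \<Longrightarrow> finite (cyclic_orderings E)"
  unfolding cyclic_orderings_def
  by (rule finite_subset[OF _ finite_permutations]) auto

lemma conj_transpose_cyclic_orderings:
  fixes x y :: 'a
  defines "\<tau> \<equiv> Transposition.transpose x y"
  assumes \<sigma>: "\<sigma> \<in> cyclic_orderings E" and "x \<in> E" "y \<in> E"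
  shows "\<tau> \<circ> \<sigma> \<circ> \<tau> \<in> cyclic_orderings E"
proof -
  have \<tau>: "\<tau> permutes E" "\<tau> \<circ> \<tau> = id"
    using assms(3,4) by (auto simp: \<tau>_def permutes_swap_id)
  have "\<sigma> permutes E" using \<sigma> by (simp add: cyclic_orderings_def)
  then have "\<tau> \<circ> \<sigma> \<circ> \<tau> permutes E"
    using \<tau>(1) by (simp add: permutes_compose comp_assoc)
  moreover have "\<exists>k. ((\<tau> \<circ> \<sigma> \<circ> \<tau>) ^^ k) u = v" if "u \<in> E" "v \<in> E" for u v
  proof -
    have "\<tau> u \<in> E" "\<tau> v \<in> E" using permutes_in_image[OF \<tau>(1)] that by auto
    then obtain k where "(\<sigma> ^^ k) (\<tau> u) = \<tau> v" using \<sigma> by (auto simp: cyclic_orderings_def)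
    then have "((\<tau> \<circ> \<sigma> \<circ> \<tau>) ^^ k) u = v"
      using \<tau>(2) by (simp add: funpow_conj_involution pointfree_idE)
    then show ?thesis by blast
  qed
  ultimately show ?thesis unfolding cyclic_orderings_def by blast
qed

lemma num_intervals_le: "finite E \<Longrightarrow> num_intervals E \<sigma> k P \<le> card {x\<in>E. P (interval \<sigma> x k)}"
  unfolding num_intervals_def
  by (rule order_trans[OF _ card_image_le[of _ "\<lambda>x. interval \<sigma> x k"]])
    (auto intro: card_mono simp: image_def)

locale rank_matroid =
  fixes E :: "'a set" and \<B> :: "'a set set" and r :: nat
  assumes matroid: "matroid_bases E \<B>" and card_basis: "\<forall>B\<in>\<B>. card B = r"
begin

lemma finite_ground: "finite E"
  using matroid by (simp add: matroid_bases_def)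

lemma basis_subset_ground: "B \<in> \<B> \<Longrightarrow> B \<subseteq> E"
  using matroid by (simp add: matroid_bases_def)

lemma bases_nonempty: "\<B> \<noteq> {}"
  using matroid by (simp add: matroid_bases_def)

lemma basis_exchange:
  "B1 \<in> \<B> \<Longrightarrow> B2 \<in> \<B> \<Longrightarrow> x \<in> B1 - B2 \<Longrightarrow> \<exists>y\<in>B2 - B1. insert y (B1 - {x}) \<in> \<B>"
  using matroid unfolding matroid_bases_def by blast

lemma indep_empty: "indep \<B> {}"
  using bases_nonempty by (auto simp: indep_def)

lemma indep_subset_ground: "indep \<B> I \<Longrightarrow> I \<subseteq> E"
  using basis_subset_ground by (auto simp: indep_def)

lemma indep_card_le: "indep \<B> I \<Longrightarrow> card I \<le> r"
  unfolding indep_def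
  using basis_subset_ground card_basis finite_ground card_mono finite_subset by metis

lemma indep_card_ge_imp_basis:
  assumes "indep \<B> I" "r \<le> card I"
  shows "I \<in> \<B>"
proof -
  obtain B where B: "B \<in> \<B>" "I \<subseteq> B" using assms(1) by (auto simp: indep_def)
  have "finite B" using B(1) basis_subset_ground finite_ground finite_subset by blast
  then have "I = B" using B assms(2) card_basis by (metis antisym card_mono card_subset_eq)
  with B show ?thesis by simp
qed

lemma finite_indep_subsets: "finite {I. I \<subseteq> X \<and> indep \<B> I}"
  by (rule finite_subset[of _ "Pow E"]) (use indep_subset_ground finite_ground in auto)

lemma card_le_mrank: "I \<subseteq> X \<Longrightarrow> indep \<B> I \<Longrightarrow> card I \<le> mrank \<B> X"
  unfolding mrank_def using finite_indep_subsets by (intro Max_ge) auto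

lemma mrank_witness:
  obtains I where "I \<subseteq> X" "indep \<B> I" "card I = mrank \<B> X"
proof -
  have "mrank \<B> X \<in> card ` {I. I \<subseteq> X \<and> indep \<B> I}"
    unfolding mrank_def using finite_indep_subsets indep_empty by (intro Max_in) auto
  then show ?thesis using that by auto
qed

lemma mrank_ground: "mrank \<B> E = r"
proof (rule antisym)
  obtain B where "B \<in> \<B>" using bases_nonempty by auto
  then show "r \<le> mrank \<B> E"
    using card_le_mrank[of B E] basis_subset_ground card_basis by (auto simp: indep_def)
  show "mrank \<B> E \<le> r"
    by (metis mrank_witness indep_card_le)
qed

lemma circuit_mrank:
  assumes "circuit E \<B> C"
  shows "C \<noteq> {}" "mrank \<B> C = card C - 1"
proof -
  have C: "C \<subseteq> E" "\<not> indep \<B> C" "\<forall>e\<in>C. indep \<B> (C - {e})"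
    using assms unfolding circuit_def by blast+
  have fin: "finite C" using C(1) finite_ground finite_subset by blast
  show "C \<noteq> {}" using C(2) indep_empty by auto
  then obtain e where "e \<in> C" by auto
  then have "card C - 1 \<le> mrank \<B> C"
    using card_le_mrank[of "C - {e}" C] C(3) fin by auto
  moreover obtain I where I: "I \<subseteq> C" "indep \<B> I" "card I = mrank \<B> C"
    by (rule mrank_witness)
  then have "card I < card C"
    using C(2) fin by (metis psubsetI psubset_card_mono)
  ultimately show "mrank \<B> C = card C - 1" using I(3) by linarith
qed

lemma circuit_hyperplane_card:
  assumes "circuit_hyperplane E \<B> C" "0 < r"
  shows "card C = r"
proof -
  have "circuit E \<B> C" "mrank \<B> C = r - 1"
    using assms(1) mrank_ground by (auto simp: circuit_hyperplane_def hyperplane_def)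
  moreover have "finite C"
    using \<open>circuit E \<B> C\<close> finite_ground finite_subset by (auto simp: circuit_def)
  ultimately show ?thesis
    using circuit_mrank assms(2) by (metis One_nat_def Suc_pred card_gt_0_iff diff_Suc_1)
qed

lemma basis_of_mrank_ge:
  assumes "r \<le> mrank \<B> X"
  obtains I where "I \<subseteq> X" "I \<in> \<B>"
  using assms by (metis mrank_witness indep_card_ge_imp_basis)

lemma dependent_insert_notin_basis:
  "\<not> indep \<B> (insert a J) \<Longrightarrow> B \<in> \<B> \<Longrightarrow> J \<subseteq> B \<Longrightarrow> a \<notin> B"
  by (auto simp: indep_def)

lemma circuit_hyperplane_insert_unique:
  assumes CHa: "circuit_hyperplane E \<B> (insert a J)" and CHb: "circuit_hyperplane E \<B> (insert b J)"
    and "a \<notin> J" "b \<notin> J" "0 < r"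
  shows "a = b"
proof (rule ccontr)
  assume "a \<noteq> b"
  have dep_a: "\<not> indep \<B> (insert a J)" and dep_b: "\<not> indep \<B> (insert b J)"
    using CHa CHb by (auto simp: circuit_hyperplane_def circuit_def)
  have "indep \<B> J"
    using CHa \<open>a \<notin> J\<close> unfolding circuit_hyperplane_def circuit_def
    by (metis Diff_insert_absorb insertI1)
  have card_J: "card J = r - 1"
    using circuit_hyperplane_card[OF CHa \<open>0 < r\<close>] \<open>a \<notin> J\<close> finite_ground CHa
    by (metis card_insert_disjoint circuit_def circuit_hyperplane_def diff_Suc_1
        finite_insert finite_subset)
  have "b \<in> E - insert a J"
    using CHb \<open>a \<noteq> b\<close> \<open>b \<notin> J\<close> by (auto simp: circuit_hyperplane_def circuit_def)
  then have "mrank \<B> (insert a J) < mrank \<B> (insert b (insert a J))"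
    using CHa by (auto simp: circuit_hyperplane_def hyperplane_def flat_def)
  moreover have "card J \<le> mrank \<B> (insert a J)"
    using card_le_mrank \<open>indep \<B> J\<close> by blast
  ultimately have "r \<le> mrank \<B> (insert b (insert a J))"
    using card_J \<open>0 < r\<close> by linarith
  then obtain I where I: "I \<subseteq> insert b (insert a J)" "I \<in> \<B>"
    by (rule basis_of_mrank_ge)
  obtain B where B: "B \<in> \<B>" "J \<subseteq> B"
    using \<open>indep \<B> J\<close> by (auto simp: indep_def)
  have "J \<noteq> B"
    using B card_basis card_J \<open>0 < r\<close> by auto
  then obtain c where c: "c \<in> B" "c \<notin> J" using B by auto
  have "c \<notin> I"
    using I c dependent_insert_notin_basis[OF dep_a B] dependent_insert_notin_basis[OF dep_b B]
    by auto
  then obtain y where y: "y \<in> I - B" "insert y (B - {c}) \<in> \<B>"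
    using basis_exchange[OF B(1) I(2)] c by blast
  have "y = a \<or> y = b" using y I B by auto
  moreover have "J \<subseteq> insert y (B - {c})" using B c by auto
  ultimately show False
    using dependent_insert_notin_basis[OF dep_a y(2)] dependent_insert_notin_basis[OF dep_b y(2)]
    by auto
qed

lemma circuit_hyperplane_interval_split:
  assumes CH: "circuit_hyperplane E \<B> (interval \<sigma> x r)"
  shows "0 < r" "interval \<sigma> x r = insert x (interval \<sigma> (\<sigma> x) (r - 1))"
    "x \<notin> interval \<sigma> (\<sigma> x) (r - 1)" "card (interval \<sigma> (\<sigma> x) (r - 1)) = r - 1"
proof -
  have "interval \<sigma> x r \<noteq> {}"
    using CH circuit_mrank(1) by (auto simp: circuit_hyperplane_def)
  then show "0 < r" using interval_0 by (metis gr0I)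
  then show split: "interval \<sigma> x r = insert x (interval \<sigma> (\<sigma> x) (r - 1))"
    using interval_Suc[of \<sigma> x "r - 1"] by simp
  have card_split: "card (interval \<sigma> x r) = r"
    using circuit_hyperplane_card[OF CH \<open>0 < r\<close>] .
  have card_J: "card (interval \<sigma> (\<sigma> x) (r - 1)) \<le> r - 1"
    by (rule card_interval_le)
  show x: "x \<notin> interval \<sigma> (\<sigma> x) (r - 1)"
  proof
    assume "x \<in> interval \<sigma> (\<sigma> x) (r - 1)"
    then have "interval \<sigma> x r = interval \<sigma> (\<sigma> x) (r - 1)" using split by auto
    then show False using card_split card_J \<open>0 < r\<close> by simp
  qed
  show "card (interval \<sigma> (\<sigma> x) (r - 1)) = r - 1"
    using card_split split x finite_interval by (metis card_insert_disjoint diff_Suc_1)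
qed

lemma conj_transpose_determines:
  assumes CH1: "circuit_hyperplane E \<B> (interval \<sigma>1 x1 r)"
    and CH2: "circuit_hyperplane E \<B> (interval \<sigma>2 x2 r)"
    and y1: "y \<notin> interval \<sigma>1 (\<sigma>1 x1) (r - 1)" and y2: "y \<notin> interval \<sigma>2 (\<sigma>2 x2) (r - 1)"
    and conj: "Transposition.transpose x1 y \<circ> \<sigma>1 \<circ> Transposition.transpose x1 y =
      Transposition.transpose x2 y \<circ> \<sigma>2 \<circ> Transposition.transpose x2 y"
  shows "x1 = x2 \<and> \<sigma>1 = \<sigma>2"
proof -
  note split1 = circuit_hyperplane_interval_split[OF CH1]
  note split2 = circuit_hyperplane_interval_split[OF CH2]
  define \<sigma>' where "\<sigma>' = Transposition.transpose x1 y \<circ> \<sigma>1 \<circ> Transposition.transpose x1 y"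
  have "interval \<sigma>1 (\<sigma>1 x1) (r - 1) = interval \<sigma>' (\<sigma>' y) (r - 1)"
    unfolding \<sigma>'_def using interval_conj_transpose[OF split1(3) y1] by simp
  also have "\<dots> = interval \<sigma>2 (\<sigma>2 x2) (r - 1)"
    unfolding \<sigma>'_def conj using interval_conj_transpose[OF split2(3) y2] by simp
  finally have J: "interval \<sigma>1 (\<sigma>1 x1) (r - 1) = interval \<sigma>2 (\<sigma>2 x2) (r - 1)" .
  have "circuit_hyperplane E \<B> (insert x1 (interval \<sigma>1 (\<sigma>1 x1) (r - 1)))"
    using CH1 split1(2) by simp
  moreover have "circuit_hyperplane E \<B> (insert x2 (interval \<sigma>1 (\<sigma>1 x1) (r - 1)))"
    using CH2 split2(2) J by simp
  moreover have "x2 \<notin> interval \<sigma>1 (\<sigma>1 x1) (r - 1)"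
    using split2(3) J by simp
  ultimately have "x1 = x2"
    using circuit_hyperplane_insert_unique split1(1,3) by blast
  let ?\<tau> = "Transposition.transpose x2 y"
  have "\<sigma>1 = ?\<tau> \<circ> (?\<tau> \<circ> \<sigma>1 \<circ> ?\<tau>) \<circ> ?\<tau>"
    by (simp add: fun_eq_iff)
  also have "\<dots> = ?\<tau> \<circ> (?\<tau> \<circ> \<sigma>2 \<circ> ?\<tau>) \<circ> ?\<tau>"
    using conj \<open>x1 = x2\<close> by simp
  also have "\<dots> = \<sigma>2"
    by (simp add: fun_eq_iff)
  finally have "\<sigma>1 = \<sigma>2" .
  with \<open>x1 = x2\<close> show ?thesis ..
qed

lemma card_circuit_hyperplane_intervals:
  "card (SIGMA \<sigma>:cyclic_orderings E. {x\<in>E. circuit_hyperplane E \<B> (interval \<sigma> x r)})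
     * (card E + 1 - r) \<le> card (cyclic_orderings E) * card E"
  (is "card ?P * _ \<le> _")
proof -
  define J :: "('a \<Rightarrow> 'a) \<times> 'a \<Rightarrow> 'a set"
    where "J = (\<lambda>(\<sigma>, x). interval \<sigma> (\<sigma> x) (r - 1))"
  define T where "T = (SIGMA p:?P. E - J p)"
  define f :: "(('a \<Rightarrow> 'a) \<times> 'a) \<times> 'a \<Rightarrow> ('a \<Rightarrow> 'a) \<times> 'a"
    where "f = (\<lambda>((\<sigma>, x), y).
      (Transposition.transpose x y \<circ> \<sigma> \<circ> Transposition.transpose x y, y))"
  have fin_P: "finite ?P"
    using finite_cyclic_orderings[OF finite_ground] finite_ground by simp
  have "card E + 1 - r \<le> card (E - J p)" if "p \<in> ?P" for p
  proof -
    obtain \<sigma> x where p: "p = (\<sigma>, x)" "circuit_hyperplane E \<B> (interval \<sigma> x r)"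
      using \<open>p \<in> ?P\<close> by auto
    then have "card (J p) = r - 1" "0 < r"
      using circuit_hyperplane_interval_split[OF p(2)] by (simp_all add: J_def)
    moreover have "card E - card (J p) \<le> card (E - J p)"
      using p(1) by (simp add: J_def diff_card_le_card_Diff finite_interval)
    ultimately show ?thesis by linarith
  qed
  then have "card ?P * (card E + 1 - r) \<le> (\<Sum>p\<in>?P. card (E - J p))"
    using sum_mono[of ?P "\<lambda>_. card E + 1 - r"] by simp
  also have "\<dots> = card T"
    unfolding T_def using fin_P finite_ground by (simp add: card_SigmaI)
  also have "card T \<le> card (cyclic_orderings E \<times> E)"
  proof (rule card_inj_on_le)
    show "inj_on f T"
    proof (rule inj_onI)
      fix a b assume "a \<in> T" "b \<in> T" "f a = f b"
      moreover obtain \<sigma>1 x1 y1 \<sigma>2 x2 y2 where "a = ((\<sigma>1, x1), y1)" "b = ((\<sigma>2, x2), y2)"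
        by (metis prod.collapse)
      ultimately have "y1 = y2" "circuit_hyperplane E \<B> (interval \<sigma>1 x1 r)"
        "circuit_hyperplane E \<B> (interval \<sigma>2 x2 r)"
        "y1 \<notin> interval \<sigma>1 (\<sigma>1 x1) (r - 1)" "y1 \<notin> interval \<sigma>2 (\<sigma>2 x2) (r - 1)"
        "Transposition.transpose x1 y1 \<circ> \<sigma>1 \<circ> Transposition.transpose x1 y1 =
         Transposition.transpose x2 y1 \<circ> \<sigma>2 \<circ> Transposition.transpose x2 y1"
        unfolding T_def f_def J_def by auto
      then show "a = b"
        using conj_transpose_determines \<open>a = _\<close> \<open>b = _\<close> by blast
    qed
    show "f ` T \<subseteq> cyclic_orderings E \<times> E"
    proof (rule image_subsetI)
      fix t assume "t \<in> T"
      then obtain \<sigma> x y where "t = ((\<sigma>, x), y)" "\<sigma> \<in> cyclic_orderings E" "x \<in> E" "y \<in> E"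
        unfolding T_def by auto
      then show "f t \<in> cyclic_orderings E \<times> E"
        unfolding f_def using conj_transpose_cyclic_orderings by simp
    qed
    show "finite (cyclic_orderings E \<times> E)"
      using finite_cyclic_orderings[OF finite_ground] finite_ground by simp
  qed
  finally show ?thesis by (simp add: card_cartesian_product)
qed

end

lemma less_double_of_mult_le:
  fixes a N n r :: nat
  assumes "a * (n + 1 - r) \<le> N * n" "2 * r \<le> n" "0 < N"
  shows "a < 2 * N"
proof -
  have "a * (n + 1 - r) \<le> N * n" by (fact assms(1))
  also have "\<dots> < N * (2 * (n + 1 - r))"
    using assms(2,3) by simp
  also have "\<dots> = (2 * N) * (n + 1 - r)"
    by simp
  finally show ?thesis
    using mult_less_cancel2 by blast
qed

theorem lemma2p7:
  fixes E :: "'a set" and \<B> :: "'a set set" and r :: nat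
  assumes "sparse_paving E \<B>"
    and "\<forall>B\<in>\<B>. card B = r"
    and "2 * r \<le> card E"
  shows "(\<Sum>\<sigma>\<in>cyclic_orderings E. real (num_intervals E \<sigma> r (circuit_hyperplane E \<B>)))
           / real (card (cyclic_orderings E)) < 2"
proof -
  interpret rank_matroid E \<B> r
    using assms(1,2) by unfold_locales (simp_all add: sparse_paving_def)
  let ?C = "cyclic_orderings E"
  let ?P = "SIGMA \<sigma>:?C. {x\<in>E. circuit_hyperplane E \<B> (interval \<sigma> x r)}"
  have "(\<Sum>\<sigma>\<in>?C. num_intervals E \<sigma> r (circuit_hyperplane E \<B>))
      \<le> (\<Sum>\<sigma>\<in>?C. card {x\<in>E. circuit_hyperplane E \<B> (interval \<sigma> x r)})"
    by (intro sum_mono num_intervals_le finite_ground)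
  also have "\<dots> = card ?P"
    using finite_cyclic_orderings[OF finite_ground] finite_ground by (simp add: card_SigmaI)
  finally have sum_le: "(\<Sum>\<sigma>\<in>?C. real (num_intervals E \<sigma> r (circuit_hyperplane E \<B>)))
      \<le> real (card ?P)"
    by (simp flip: of_nat_sum)
  show ?thesis
  proof (cases "card ?C = 0")
    case False
    then have "card ?P < 2 * card ?C"
      using less_double_of_mult_le card_circuit_hyperplane_intervals assms(3) by blast
    then show ?thesis
      using sum_le False by (simp add: divide_less_eq)
  qed simp
qed

end
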